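(* For every positive integer $s$ and every integer $j\ge 1$, $$\sum_{i=0}^{j-1}h_{s,i,j}=(-1)^{j+1}(s-1)\binom{s-1}{j-1},$$ where $h_{s,i,j}$ is defined in the context.
   Context: For a fixed positive integer $s$, the numbers $h_{s,i,j}$ (integers $i\ge 0$, $j$) are defined recursively by: $h_{s,i,j}=0$ if $j\le i$; for $i=0$ and $j\ge 1$, $h_{s,0,j}=\binom{s+j-1}{j}\frac{s-j}{s}$; for $i>0$ and $j>i$, $h_{s,i,j}=-\frac{s-j+1}{i}h_{s,i-1,j-1}-\frac{j-i}{i}h_{s,i-1,j}$. *)

theory Defs
  imports Complex_Main
begin

fun h :: "nat \<Rightarrow> nat \<Rightarrow> nat \<Rightarrow> real" where
  "h s 0 j = (if j = 0 then 0
              else real ((s + j - 1) choose j) * (real s - real j) / real s)"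
| "h s (Suc i) j = (if j \<le> Suc i then 0
              else - ((real s - real j + 1) / real (Suc i)) * h s i (j - 1)
                   - ((real j - real (Suc i)) / real (Suc i)) * h s i j)"

end

theory Submission
  imports Defs
begin

(* Let S n = (\<Sum>i<n. h s i n).  Summing the recurrence for h s (i + 1) (n + 1)
   over i, the weighted terms i * h s i (n + 1) cancel against the shifted left-hand side,
   leaving n * S (n + 1) = - (s - n) * S n.  Together with S 1 = s - 1 this is the
   recurrence of (-1)^n * (s - 1) * ((s - 1) choose n). *)

lemma gbinomial_Suc_absorb_comp:
  "of_nat (Suc k) * (a gchoose Suc k) = (a - of_nat k) * (a gchoose k)"
  by (simp only: gbinomial_absorption gbinomial_absorb_comp)

lemma h_eq_0: "j \<le> i \<Longrightarrow> h s i j = 0"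
  by (cases i) auto

lemma h_Suc_Suc:
  assumes "i \<le> n"
  shows "real (Suc i) * h s (Suc i) (Suc n)
     = - (real s - real n) * h s i n - (real n - real i) * h s i (Suc n)"
proof (cases "i = n")
  case True
  then show ?thesis by (simp add: h_eq_0)
next
  case False
  with assms have "\<not> Suc n \<le> Suc i" by simp
  then show ?thesis
    by (simp del: of_nat_Suc add: field_simps) (simp add: algebra_simps)
qed

lemma sum_h_Suc:
  "real n * (\<Sum>i<Suc n. h s i (Suc n)) = - (real s - real n) * (\<Sum>i<n. h s i n)"
proof -
  let ?H = "\<lambda>i. h s i (Suc n)"
  have "(\<Sum>i<Suc n. real i * ?H i) = (\<Sum>i<Suc (Suc n). real i * ?H i)"
    by (simp add: h_eq_0)
  also have "\<dots> = (\<Sum>i<Suc n. real (Suc i) * ?H (Suc i))"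
    by (subst sum.lessThan_Suc_shift) simp
  also have "\<dots> = (\<Sum>i<Suc n. - (real s - real n) * h s i n - (real n - real i) * ?H i)"
    by (intro sum.cong refl h_Suc_Suc) simp
  also have "\<dots> = - (real s - real n) * (\<Sum>i<Suc n. h s i n)
      - real n * (\<Sum>i<Suc n. ?H i) + (\<Sum>i<Suc n. real i * ?H i)"
    by (simp add: sum_subtractf sum_distrib_left sum.distrib algebra_simps)
  also have "(\<Sum>i<Suc n. h s i n) = (\<Sum>i<n. h s i n)"
    by (simp add: h_eq_0)
  finally show ?thesis by linarith
qed

lemma sum_h_closed_form:
  assumes "s \<ge> 1"
  shows "(\<Sum>i<Suc n. h s i (Suc n)) = (-1) ^ n * (real s - 1) * ((real s - 1) gchoose n)"
proof (induction n)
  case 0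
  from assms show ?case by simp
next
  case (Suc n)
  have "real (Suc n) * (\<Sum>i<Suc (Suc n). h s i (Suc (Suc n)))
      = - (real s - 1 - real n) * ((-1) ^ n * (real s - 1) * ((real s - 1) gchoose n))"
    using sum_h_Suc[of "Suc n" s] Suc.IH by simp
  also have "\<dots> = (-1) ^ Suc n * (real s - 1) * ((real s - 1 - real n) * ((real s - 1) gchoose n))"
    by (simp add: algebra_simps)
  also have "\<dots> = real (Suc n) * ((-1) ^ Suc n * (real s - 1) * ((real s - 1) gchoose Suc n))"
    by (subst gbinomial_Suc_absorb_comp [symmetric]) (simp only: ac_simps)
  finally show ?case
    by (metis mult_cancel_left of_nat_eq_0_iff nat.distinct(1))
qed

theorem corollary9:
  fixes s j :: nat
  assumes "s \<ge> 1" and "j \<ge> 1"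
  shows "(\<Sum>i = 0..j - 1. h s i j) = (-1) ^ (j + 1) * (real s - 1) * real ((s - 1) choose (j - 1))"
proof -
  obtain n where j: "j = Suc n"
    using assms(2) by (cases j) auto
  have "{0..j - 1} = {..<Suc n}"
    using j by auto
  moreover have "real ((s - 1) choose n) = (real s - 1) gchoose n"
    using assms(1) by (simp add: binomial_gbinomial of_nat_diff)
  ultimately show ?thesis
    using sum_h_closed_form[OF assms(1), of n] j by simp
qed

end
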